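(* Consider the boundary driven Kawasaki process on $\{0,1\}^N$ with $N\geq 5$ and $\mu_L>\kappa>0>\mu_R$, $|\mu_R|>\kappa$. For $x\in\mathcal{P}$, let $\mathcal{A}_x$ be the set consisting of $x$ and all its preferred successors. Then $\mathcal{A}_x$ is an attractor, and $\mathcal{A}_x\cap\mathcal{A}_y=\emptyset$ for all $y\in\mathcal{P}$ with $y\neq x$.
   Context: Configurations $x\in\{0,1\}^N$; energy $E(x)=-\kappa\sum_{i=1}^{N-1}x(i)x(i+1)$. $x^{i,j}$: occupations of $i,j$ exchanged; $x^i$ ($i\in\{1,N\}$): occupation of $i$ flipped. Transitions: for $|i-j|=1$, $x(i)\neq x(j)$, $x\to x^{i,j}$ at rate $\exp[-\frac\beta2(E(x^{i,j})-E(x))]$; for $i\in\{1,N\}$, $x\to x^i$ at rate $\exp[\frac{\beta\mu_i}{2}(1-2x(i))]\exp[-\frac\beta2(E(x^i)-E(x))]$, $\mu_1=\mu_L$, $\mu_N=\mu_R$. Two configurations are adjacent if one can jump to the other. For adjacent $x,y$: $\phi(x,y)=\lim_{\beta\to\infty}\frac1\beta\log k(x\to y)$, $\Gamma(x)=-\max_y\phi(x,y)$, $U(x,y)=-\phi(x,y)-\Gamma(x)$; $y$ is a preferred successor of $x$ if $U(x,y)=0$. For a path $D=(x_0,\dots,x_n)$ of adjacent configurations, $U(D)=\sum_m U(x_m,x_{m+1})$, and $\mathcal{U}(x,y)$ is the minimum of $U(D)$ over paths from $x$ to $y$. A non-empty set $A$ is an attractor if $\mathcal{U}(x,y)=0$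 for all $x\neq y\in A$ and $\mathcal{U}(x,y)>0$ for all $x\in A$, $y\notin A$. Writing a configuration by its blocks $(p_0,q_0,\dots,p_n,q_n)$ ($p_0$ occupied sites from site 1, then $q_0$ vacant, then $p_1$ occupied, etc.), $\mathcal{P}$ is the set of configurations with $p_i\geq 3$ for all $i$, $q_i\geq 3$ for $i<n$, and $q_n\geq 2$. *)

theory Defs
  imports Complex_Main
begin

text \<open>Configurations on sites 1..N are lists of length N with entries in {0,1};
  the occupation of site i (1-based) is the (i-1)-th list entry.\<close>

definition conf :: "nat \<Rightarrow> nat list set" where
  "conf N = {x. length x = N \<and> set x \<subseteq> {0, 1}}"

definition occ :: "nat list \<Rightarrow> nat \<Rightarrow> nat" where
  "occ x i = x ! (i - 1)"

definition energy :: "real \<Rightarrow> nat \<Rightarrow> nat list \<Rightarrow> real" where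
  "energy \<kappa> N x = - \<kappa> * (\<Sum>i = 1..N - 1. real (occ x i * occ x (i + 1)))"

definition swap :: "nat list \<Rightarrow> nat \<Rightarrow> nat \<Rightarrow> nat list" where
  "swap x i j = x[i - 1 := occ x j, j - 1 := occ x i]"

definition flip :: "nat list \<Rightarrow> nat \<Rightarrow> nat list" where
  "flip x i = x[i - 1 := 1 - occ x i]"

definition swap_jump :: "nat \<Rightarrow> nat list \<Rightarrow> nat list \<Rightarrow> bool" where
  "swap_jump N x y \<longleftrightarrow> (\<exists>i j. 1 \<le> i \<and> i \<le> N \<and> 1 \<le> j \<and> j \<le> N \<and>
      (i = j + 1 \<or> j = i + 1) \<and> occ x i \<noteq> occ x j \<and> y = swap x i j)"

definition jump :: "nat \<Rightarrow> nat list \<Rightarrow> nat list \<Rightarrow> bool" where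
  "jump N x y \<longleftrightarrow> x \<in> conf N \<and> (swap_jump N x y \<or> y = flip x 1 \<or> y = flip x N)"

definition adjacent :: "nat \<Rightarrow> nat list \<Rightarrow> nat list \<Rightarrow> bool" where
  "adjacent N x y \<longleftrightarrow> jump N x y \<or> jump N y x"

definition rate :: "real \<Rightarrow> real \<Rightarrow> real \<Rightarrow> nat \<Rightarrow> real \<Rightarrow> nat list \<Rightarrow> nat list \<Rightarrow> real" where
  "rate \<kappa> \<mu>L \<mu>R N \<beta> x y =
     (if swap_jump N x y then exp (- \<beta> / 2 * (energy \<kappa> N y - energy \<kappa> N x))
      else if y = flip x 1 then
        exp (\<beta> * \<mu>L / 2 * (1 - 2 * real (occ x 1))) * exp (- \<beta> / 2 * (energy \<kappa> N y - energy \<kappa> N x))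
      else if y = flip x N then
        exp (\<beta> * \<mu>R / 2 * (1 - 2 * real (occ x N))) * exp (- \<beta> / 2 * (energy \<kappa> N y - energy \<kappa> N x))
      else 0)"

definition phi :: "real \<Rightarrow> real \<Rightarrow> real \<Rightarrow> nat \<Rightarrow> nat list \<Rightarrow> nat list \<Rightarrow> real" where
  "phi \<kappa> \<mu>L \<mu>R N x y = Lim at_top (\<lambda>\<beta>. (1 / \<beta>) * ln (rate \<kappa> \<mu>L \<mu>R N \<beta> x y))"

definition Gamma :: "real \<Rightarrow> real \<Rightarrow> real \<Rightarrow> nat \<Rightarrow> nat list \<Rightarrow> real" where
  "Gamma \<kappa> \<mu>L \<mu>R N x = - Max {phi \<kappa> \<mu>L \<mu>R N x y | y. adjacent N x y}"

definition Ucost :: "real \<Rightarrow> real \<Rightarrow> real \<Rightarrow> nat \<Rightarrow> nat list \<Rightarrow> nat list \<Rightarrow> real" where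
  "Ucost \<kappa> \<mu>L \<mu>R N x y = - phi \<kappa> \<mu>L \<mu>R N x y - Gamma \<kappa> \<mu>L \<mu>R N x"

definition preferred_successor :: "real \<Rightarrow> real \<Rightarrow> real \<Rightarrow> nat \<Rightarrow> nat list \<Rightarrow> nat list \<Rightarrow> bool" where
  "preferred_successor \<kappa> \<mu>L \<mu>R N x y \<longleftrightarrow> adjacent N x y \<and> Ucost \<kappa> \<mu>L \<mu>R N x y = 0"

definition is_path :: "nat \<Rightarrow> nat list list \<Rightarrow> nat list \<Rightarrow> nat list \<Rightarrow> bool" where
  "is_path N D x y \<longleftrightarrow> D \<noteq> [] \<and> hd D = x \<and> last D = y \<and> x \<in> conf N \<and>
     (\<forall>m. m + 1 < length D \<longrightarrow> adjacent N (D ! m) (D ! (m + 1)))"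

definition path_cost :: "real \<Rightarrow> real \<Rightarrow> real \<Rightarrow> nat \<Rightarrow> nat list list \<Rightarrow> real" where
  "path_cost \<kappa> \<mu>L \<mu>R N D = (\<Sum>m < length D - 1. Ucost \<kappa> \<mu>L \<mu>R N (D ! m) (D ! (m + 1)))"

text \<open>\<U>(x,y): minimum of U(D) over paths from x to y (taken as an infimum; the minimum
  is attained since U(D) takes values in a discrete set bounded below by 0)\<close>
definition calU :: "real \<Rightarrow> real \<Rightarrow> real \<Rightarrow> nat \<Rightarrow> nat list \<Rightarrow> nat list \<Rightarrow> real" where
  "calU \<kappa> \<mu>L \<mu>R N x y = Inf {path_cost \<kappa> \<mu>L \<mu>R N D | D. is_path N D x y}"

definition attractor :: "real \<Rightarrow> real \<Rightarrow> real \<Rightarrow> nat \<Rightarrow> nat list set \<Rightarrow> bool" where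
  "attractor \<kappa> \<mu>L \<mu>R N A \<longleftrightarrow> A \<noteq> {} \<and> A \<subseteq> conf N \<and>
     (\<forall>x\<in>A. \<forall>y\<in>A. x \<noteq> y \<longrightarrow> calU \<kappa> \<mu>L \<mu>R N x y = 0) \<and>
     (\<forall>x\<in>A. \<forall>y\<in>conf N - A. calU \<kappa> \<mu>L \<mu>R N x y > 0)"

definition of_blocks :: "(nat \<times> nat) list \<Rightarrow> nat list" where
  "of_blocks bs = concat (map (\<lambda>(p, q). replicate p 1 @ replicate q 0) bs)"

definition calP :: "nat \<Rightarrow> nat list set" where
  "calP N = {x \<in> conf N. \<exists>bs. bs \<noteq> [] \<and> x = of_blocks bs \<and>
      (\<forall>i < length bs. fst (bs ! i) \<ge> 3) \<and>
      (\<forall>i < length bs - 1. snd (bs ! i) \<ge> 3) \<and>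
      snd (last bs) \<ge> 2}"

definition attr_set :: "real \<Rightarrow> real \<Rightarrow> real \<Rightarrow> nat \<Rightarrow> nat list \<Rightarrow> nat list set" where
  "attr_set \<kappa> \<mu>L \<mu>R N x = insert x {y. preferred_successor \<kappa> \<mu>L \<mu>R N x y}"

end

theory Submission
  imports Defs
begin

text \<open>For x in \<open>\<P>\<close> every run of equal occupations except the last is at least
  three sites long, x starts with 111 and ends with 00. Hence the cheapest moves out of x
  are the exchanges across a domain wall, each breaking exactly one bond (\<open>\<phi> = -\<kappa>/2\<close>),
  while the boundary flips are strictly more expensive because \<open>\<mu>\<^sub>L > \<kappa>\<close> and \<open>\<mu>\<^sub>R < -\<kappa>\<close>.
  So \<open>\<Gamma>(x) = \<kappa>/2\<close> and the preferred successors of x are exactly these exchanges. From such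
  a successor y the reverse exchange restores the bond (\<open>\<phi> = \<kappa>/2\<close>), and because the runs
  of x are long no other move of y gains energy; so \<open>\<Gamma>(y) = -\<kappa>/2\<close> and x is the unique
  preferred successor of y. Thus the points of \<open>\<A>\<^sub>x\<close> are joined by zero-cost steps and
  every step leaving \<open>\<A>\<^sub>x\<close> has positive cost; disjointness follows from the sign of \<open>\<Gamma>\<close>
  and the uniqueness of the preferred successor of y.\<close>

text \<open>List indices are 0-based, sites 1-based: \<open>exch x k = swap x (k+1) (k+2)\<close>.\<close>

definition exch :: "nat list \<Rightarrow> nat \<Rightarrow> nat list" where
  "exch x k = x[k := x!(k+1), k+1 := x!k]"

lemma length_exch [simp]: "length (exch x k) = length x"
  by (simp add: exch_def)

lemma nth_exch:
  "k+1 < length x \<Longrightarrow> exch x k ! k = x!(k+1) \<and> exch x k ! (k+1) = x!k \<and>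
     (\<forall>i. i \<noteq> k \<and> i \<noteq> k+1 \<longrightarrow> exch x k ! i = x ! i)"
  unfolding exch_def by (auto simp: nth_list_update)

lemma exch_exch: "k+1 < length x \<Longrightarrow> exch (exch x k) k = x"
  unfolding exch_def by (auto intro!: nth_equalityI simp: nth_list_update)

lemma exch_decomp:
  assumes "k+1 < length x"
  shows "x = take k x @ x!k # x!(k+1) # drop (k+2) x"
    and "exch x k = take k x @ x!(k+1) # x!k # drop (k+2) x"
proof -
  show x: "x = take k x @ x!k # x!(k+1) # drop (k+2) x"
    using assms by (metis Cons_nth_drop_Suc Suc_eq_plus1 Suc_lessD add_Suc_right
        append_take_drop_id one_add_one plus_1_eq_Suc)
  have "length (take k x) = k" using assms by simp
  then have "(take k x @ x!k # x!(k+1) # drop (k+2) x)[k := x!(k+1), k+1 := x!k]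
      = take k x @ x!(k+1) # x!k # drop (k+2) x"
    by (simp add: list_update_append)
  then show "exch x k = take k x @ x!(k+1) # x!k # drop (k+2) x"
    unfolding exch_def using x by metis
qed

lemma swap_jump_iff_exch:
  "swap_jump N x w \<longleftrightarrow> (\<exists>k. k+1 < N \<and> x!k \<noteq> x!(k+1) \<and> w = exch x k)"
proof
  assume "swap_jump N x w"
  then obtain i j where h: "1 \<le> i" "i \<le> N" "1 \<le> j" "j \<le> N" "i = j + 1 \<or> j = i + 1"
     "occ x i \<noteq> occ x j" "w = swap x i j" unfolding swap_jump_def by blast
  show "\<exists>k. k+1 < N \<and> x!k \<noteq> x!(k+1) \<and> w = exch x k"
  proof (cases "i = j + 1")
    case True
    then show ?thesis using h
      by (intro exI[of _ "j-1"]) (auto simp: swap_def exch_def occ_def list_update_swap)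
  next
    case False
    then show ?thesis using h
      by (intro exI[of _ "i-1"]) (auto simp: swap_def exch_def occ_def)
  qed
next
  assume "\<exists>k. k+1 < N \<and> x!k \<noteq> x!(k+1) \<and> w = exch x k"
  then obtain k where "k+1 < N" "x!k \<noteq> x!(k+1)" "w = exch x k" by blast
  then show "swap_jump N x w" unfolding swap_jump_def
    by (intro exI[of _ "k+1"] exI[of _ "k+2"]) (auto simp: swap_def exch_def occ_def)
qed

lemma flip_first_eq: "flip x 1 = x[0 := 1 - x!0]"
  by (simp add: flip_def occ_def)

lemma flip_last_eq: "flip x N = x[N-1 := 1 - x!(N-1)]"
  by (simp add: flip_def occ_def)

subsection \<open>Energy as a bond count\<close>

fun bonds :: "nat list \<Rightarrow> nat" where
  "bonds (a # b # xs) = a * b + bonds (b # xs)"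
| "bonds _ = 0"

lemma bonds_eq_sum: "bonds x = (\<Sum>i<length x - 1. x!i * x!(i+1))"
proof (induction x rule: bonds.induct)
  case (1 a b xs)
  have "(\<Sum>i<length (a#b#xs) - 1. (a#b#xs)!i * (a#b#xs)!(i+1))
      = a * b + (\<Sum>i<length (b#xs) - 1. (b#xs)!i * (b#xs)!(i+1))"
    by (simp add: sum.lessThan_Suc_shift del: sum.lessThan_Suc)
  then show ?case using 1 by simp
qed auto

lemma energy_eq_bonds:
  assumes "length x = N"
  shows "energy \<kappa> N x = - \<kappa> * real (bonds x)"
proof -
  have "{1..N-1} = Suc ` {..<N-1}"
    by (simp add: atLeast1_atMost_eq_remove0 lessThan_Suc_atMost[symmetric] image_Suc_lessThan)
  then have "(\<Sum>i = 1..N - 1. real (occ x i * occ x (i + 1))) = (\<Sum>i<N - 1. real (x!i * x!(i+1)))"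
    by (simp add: sum.reindex occ_def)
  then show ?thesis unfolding energy_def bonds_eq_sum using assms by simp
qed

lemma bonds_Cons: "bonds (a # w) = (case w of [] \<Rightarrow> 0 | b # _ \<Rightarrow> a * b) + bonds w"
  by (cases w) auto

lemma bonds_append:
  "bonds (u @ w) = bonds u + bonds w + (if u = [] \<or> w = [] then 0 else last u * hd w)"
proof (induction u)
  case (Cons a u)
  then show ?case by (cases u; cases w) (auto simp: bonds_Cons)
qed simp

lemma bonds_middle:
  "int (bonds (u @ p # q # v)) = int (bonds u) + int (bonds v) + int p * int q
   + (if u = [] then 0 else int (last u) * int p) + (if v = [] then 0 else int q * int (hd v))"
  by (simp add: bonds_append bonds_Cons split: list.splits)

definition bond_gain :: "nat list \<Rightarrow> nat \<Rightarrow> int" where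
  "bond_gain z k = (int (z!(k+1)) - int (z!k)) *
     ((if k = 0 then 0 else int (z!(k-1))) - (if k+2 < length z then int (z!(k+2)) else 0))"

lemma bonds_exch:
  assumes "k+1 < length x"
  shows "int (bonds (exch x k)) = int (bonds x) + bond_gain x k"
proof -
  let ?u = "take k x" and ?v = "drop (k+2) x"
  have "?u \<noteq> [] \<Longrightarrow> last ?u = x!(k-1)" "?v \<noteq> [] \<Longrightarrow> hd ?v = x!(k+2)"
    "?u = [] \<longleftrightarrow> k = 0" "?v = [] \<longleftrightarrow> \<not> k+2 < length x"
    using assms by (auto simp: last_conv_nth hd_drop_conv_nth)
  moreover have "bonds (exch x k) = bonds (?u @ x!(k+1) # x!k # ?v)"
    "bonds x = bonds (?u @ x!k # x!(k+1) # ?v)"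
    using exch_decomp[OF assms] by metis+
  ultimately show ?thesis
    unfolding bond_gain_def by (auto simp: bonds_middle algebra_simps)
qed

lemma bond_gain_pos_alternating:
  assumes "\<forall>i<length z. z!i \<le> 1" "0 < m" "m+2 < length z" "bond_gain z m > 0"
  shows "z!(m-1) \<noteq> z!m" "z!m \<noteq> z!(m+1)" "z!(m+1) \<noteq> z!(m+2)"
proof -
  have "z!(m-1) \<le> 1" "z!m \<le> 1" "z!(m+1) \<le> 1" "z!(m+2) \<le> 1" using assms(1,3) by auto
  moreover have "bond_gain z m = (int (z!(m+1)) - int (z!m)) * (int (z!(m-1)) - int (z!(m+2)))"
    unfolding bond_gain_def using assms(2,3) by auto
  ultimately show "z!(m-1) \<noteq> z!m" "z!m \<noteq> z!(m+1)" "z!(m+1) \<noteq> z!(m+2)"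
    using assms(4) by (cases "z!(m-1)"; cases "z!m"; cases "z!(m+1)"; cases "z!(m+2)"; simp)+
qed

lemma bonds_update_first:
  assumes "2 \<le> length z"
  shows "int (bonds (z[0 := a])) = int (bonds z) + (int a - int (z!0)) * int (z!1)"
proof -
  obtain p q v where "z = p # q # v" using assms by (cases z; cases "tl z") auto
  then show ?thesis by (simp add: algebra_simps)
qed

lemma bonds_update_last:
  assumes "2 \<le> length z" "length z = N"
  shows "int (bonds (z[N-1 := a])) = int (bonds z) + (int a - int (z!(N-1))) * int (z!(N-2))"
proof -
  obtain u p where z: "z = u @ [p]"
    using assms by (metis append_butlast_last_id list.size(3) not_numeral_le_zero)
  have u: "u \<noteq> []" "length u = N - 1" using assms z by auto
  then have "z[N-1 := a] = u @ [a]" "z!(N-1) = p" "z!(N-2) = last u"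
    using z assms by (auto simp: nth_append last_conv_nth numeral_2_eq_2 list_update_append)
  then show ?thesis using z u by (simp add: bonds_append algebra_simps)
qed

lemma length_conf: "x \<in> conf N \<Longrightarrow> length x = N"
  unfolding conf_def by simp

lemma conf_nth_le_1: "x \<in> conf N \<Longrightarrow> i < N \<Longrightarrow> x!i \<le> 1"
  unfolding conf_def using nth_mem by fastforce

lemma conf_list_update: "x \<in> conf N \<Longrightarrow> v \<le> 1 \<Longrightarrow> x[i := v] \<in> conf N"
  unfolding conf_def using set_update_subset_insert[of x i v] by auto

lemma exch_in_conf: "x \<in> conf N \<Longrightarrow> k+1 < N \<Longrightarrow> exch x k \<in> conf N"
proof -
  assume "x \<in> conf N" "k+1 < N"
  moreover have "x!k \<le> 1" "x!(k+1) \<le> 1" using calculation conf_nth_le_1 by auto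
  ultimately show ?thesis unfolding exch_def by (intro conf_list_update) auto
qed

lemma flip_first_in_conf: "x \<in> conf N \<Longrightarrow> flip x 1 \<in> conf N"
  unfolding flip_first_eq by (intro conf_list_update) auto

lemma flip_last_in_conf: "x \<in> conf N \<Longrightarrow> flip x N \<in> conf N"
  unfolding flip_last_eq by (intro conf_list_update) auto

lemma adjacent_in_conf: "adjacent N a b \<Longrightarrow> a \<in> conf N \<and> b \<in> conf N"
  unfolding adjacent_def jump_def swap_jump_iff_exch
  using exch_in_conf flip_first_in_conf flip_last_in_conf by blast

lemma finite_conf: "finite (conf N)"
proof -
  have "finite {xs. set xs \<subseteq> ({0,1}::nat set) \<and> length xs = N}"
    by (rule finite_lists_length_eq) simp
  then show ?thesis unfolding conf_def by (simp add: conj_commute)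
qed

lemma finite_adjacent: "finite {y. adjacent N a y}"
  using adjacent_in_conf by (metis (no_types, lifting) finite_conf finite_subset mem_Collect_eq subsetI)

lemma flip_first_flip_first:
  assumes "w \<in> conf N" "N \<ge> 2" shows "flip (flip w 1) 1 = w"
proof -
  have "w!0 \<le> 1" "length w = N" using assms conf_nth_le_1 length_conf by auto
  then show ?thesis unfolding flip_first_eq using assms
    by (auto intro!: nth_equalityI simp: nth_list_update)
qed

lemma flip_last_flip_last:
  assumes "w \<in> conf N" "N \<ge> 2" shows "flip (flip w N) N = w"
proof -
  have "w!(N-1) \<le> 1" "length w = N" using assms conf_nth_le_1 length_conf by auto
  then show ?thesis unfolding flip_last_eq using assms
    by (auto intro!: nth_equalityI simp: nth_list_update)
qed

lemma adjacent_iff: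
  assumes "x \<in> conf N" "N \<ge> 2"
  shows "adjacent N x w \<longleftrightarrow>
    w = flip x 1 \<or> w = flip x N \<or> (\<exists>k. k+1 < N \<and> x!k \<noteq> x!(k+1) \<and> w = exch x k)"
proof
  assume "adjacent N x w"
  then consider "jump N x w" | "jump N w x" unfolding adjacent_def by blast
  then show "w = flip x 1 \<or> w = flip x N \<or> (\<exists>k. k+1 < N \<and> x!k \<noteq> x!(k+1) \<and> w = exch x k)"
  proof cases
    case 1 then show ?thesis unfolding jump_def swap_jump_iff_exch by blast
  next
    case 2
    then have w: "w \<in> conf N" unfolding jump_def by blast
    from 2 consider "swap_jump N w x" | "x = flip w 1" | "x = flip w N" unfolding jump_def by blast
    then show ?thesis
    proof cases
      case 1
      then obtain k where k: "k+1 < N" "w!k \<noteq> w!(k+1)" "x = exch w k"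
        unfolding swap_jump_iff_exch by blast
      then have "w = exch x k" "x!k \<noteq> x!(k+1)"
        using exch_exch nth_exch[of k w] length_conf[OF w] by auto
      then show ?thesis using k by blast
    qed (use flip_first_flip_first flip_last_flip_last w assms in auto)
  qed
next
  assume "w = flip x 1 \<or> w = flip x N \<or> (\<exists>k. k+1 < N \<and> x!k \<noteq> x!(k+1) \<and> w = exch x k)"
  then show "adjacent N x w" unfolding adjacent_def jump_def swap_jump_iff_exch using assms by blast
qed

subsection \<open>Exponential rates\<close>

lemma phi_eqI:
  assumes "\<And>\<beta>. \<beta> > 0 \<Longrightarrow> rate \<kappa> \<mu>L \<mu>R N \<beta> x y = exp (\<beta> * c)"
  shows "phi \<kappa> \<mu>L \<mu>R N x y = c"
proof -
  have "eventually (\<lambda>\<beta>. (1 / \<beta>) * ln (rate \<kappa> \<mu>L \<mu>R N \<beta> x y) = c) at_top"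
    using eventually_gt_at_top[of "0::real"] by eventually_elim (simp add: assms)
  then have "((\<lambda>\<beta>. (1 / \<beta>) * ln (rate \<kappa> \<mu>L \<mu>R N \<beta> x y)) \<longlongrightarrow> c) at_top"
    by (rule tendsto_eventually)
  then show ?thesis unfolding phi_def by (rule tendsto_Lim[rotated]) simp
qed

lemma not_swap_jump_flip_first:
  assumes "length x = N" "N \<ge> 2" shows "\<not> swap_jump N x (flip x 1)"
proof
  assume "swap_jump N x (flip x 1)"
  then obtain k where k: "k+1 < N" "x!k \<noteq> x!(k+1)" "flip x 1 = exch x k"
    unfolding swap_jump_iff_exch by blast
  then have "flip x 1 ! (k+1) = x!k" using nth_exch[of k x] assms by auto
  then show False using k unfolding flip_first_eq by simp
qed

lemma not_swap_jump_flip_last: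
  assumes "length x = N" "N \<ge> 2" shows "\<not> swap_jump N x (flip x N)"
proof
  assume "swap_jump N x (flip x N)"
  then obtain k where k: "k+1 < N" "x!k \<noteq> x!(k+1)" "flip x N = exch x k"
    unfolding swap_jump_iff_exch by blast
  then have "flip x N ! k = x!(k+1)" using nth_exch[of k x] assms by auto
  then show False using k unfolding flip_last_eq by simp
qed

lemma flip_last_ne_flip_first:
  assumes "length x = N" "N \<ge> 2" "x!0 \<le> 1" shows "flip x N \<noteq> flip x 1"
proof
  assume "flip x N = flip x 1"
  then have "flip x N ! 0 = flip x 1 ! 0" by simp
  then show False unfolding flip_last_eq flip_first_eq using assms by (auto simp: nth_list_update; presburger)
qed

lemma phi_exch:
  assumes "x \<in> conf N" "k+1 < N" "x!k \<noteq> x!(k+1)"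
  shows "phi \<kappa> \<mu>L \<mu>R N x (exch x k) = \<kappa> / 2 * bond_gain x k"
proof (rule phi_eqI)
  fix \<beta> :: real
  have "swap_jump N x (exch x k)" unfolding swap_jump_iff_exch using assms by blast
  moreover have "real (bonds (exch x k)) = real (bonds x) + bond_gain x k"
    using bonds_exch[of k x] assms length_conf by (metis of_int_add of_int_of_nat_eq)
  ultimately show "rate \<kappa> \<mu>L \<mu>R N \<beta> x (exch x k) = exp (\<beta> * (\<kappa> / 2 * bond_gain x k))"
    unfolding rate_def using assms length_conf by (simp add: energy_eq_bonds algebra_simps)
qed

lemma phi_flip_first:
  assumes "x \<in> conf N" "N \<ge> 2"
  shows "phi \<kappa> \<mu>L \<mu>R N x (flip x 1) =
    \<mu>L / 2 * (1 - 2 * real (x!0)) + \<kappa> / 2 * ((1 - 2 * real (x!0)) * real (x!1))"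
proof (rule phi_eqI)
  fix \<beta> :: real
  have l: "length x = N" "length (flip x 1) = N"
    using assms length_conf flip_first_in_conf by auto
  have x0: "x!0 \<le> 1" using assms conf_nth_le_1 by auto
  have "int (bonds (flip x 1)) = int (bonds x) + (int (1 - x!0) - int (x!0)) * int (x!1)"
    unfolding flip_first_eq using bonds_update_first l assms by auto
  then have "real (bonds (flip x 1)) = real (bonds x) + (real (1 - x!0) - real (x!0)) * real (x!1)"
    by (metis (mono_tags, opaque_lifting) of_int_add of_int_diff of_int_mult of_int_of_nat_eq)
  then have e: "real (bonds (flip x 1)) = real (bonds x) + (1 - 2 * real (x!0)) * real (x!1)"
    using x0 by (simp add: of_nat_diff)
  show "rate \<kappa> \<mu>L \<mu>R N \<beta> x (flip x 1) = exp (\<beta> * (\<mu>L / 2 * (1 - 2 * real (x!0))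
     + \<kappa> / 2 * ((1 - 2 * real (x!0)) * real (x!1))))"
    unfolding rate_def using not_swap_jump_flip_first[OF l(1) assms(2)] l
    by (simp add: energy_eq_bonds e e[simplified One_nat_def] occ_def algebra_simps mult_exp_exp)
qed

lemma phi_flip_last:
  assumes "x \<in> conf N" "N \<ge> 2"
  shows "phi \<kappa> \<mu>L \<mu>R N x (flip x N) =
    \<mu>R / 2 * (1 - 2 * real (x!(N-1))) + \<kappa> / 2 * ((1 - 2 * real (x!(N-1))) * real (x!(N-2)))"
proof (rule phi_eqI)
  fix \<beta> :: real
  have l: "length x = N" "length (flip x N) = N"
    using assms length_conf flip_last_in_conf by auto
  have x0: "x!0 \<le> 1" "x!(N-1) \<le> 1" using assms conf_nth_le_1 by auto
  have "int (bonds (flip x N)) = int (bonds x) + (int (1 - x!(N-1)) - int (x!(N-1))) * int (x!(N-2))"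
    unfolding flip_last_eq using bonds_update_last l assms by auto
  then have "real (bonds (flip x N)) = real (bonds x) + (real (1 - x!(N-1)) - real (x!(N-1))) * real (x!(N-2))"
    by (metis (mono_tags, opaque_lifting) of_int_add of_int_diff of_int_mult of_int_of_nat_eq)
  then have e: "real (bonds (flip x N)) = real (bonds x) + (1 - 2 * real (x!(N-1))) * real (x!(N-2))"
    using x0 by (simp add: of_nat_diff)
  show "rate \<kappa> \<mu>L \<mu>R N \<beta> x (flip x N) = exp (\<beta> * (\<mu>R / 2 * (1 - 2 * real (x!(N-1)))
     + \<kappa> / 2 * ((1 - 2 * real (x!(N-1))) * real (x!(N-2)))))"
    unfolding rate_def
    using not_swap_jump_flip_last[OF l(1) assms(2)] flip_last_ne_flip_first[OF l(1) assms(2) x0(1)] l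
    by (simp add: energy_eq_bonds e e[simplified One_nat_def] occ_def algebra_simps mult_exp_exp)
qed

lemma finite_phi_image: "finite {phi \<kappa> \<mu>L \<mu>R N a y | y. adjacent N a y}"
  using finite_image_set[OF finite_adjacent] .

lemma Gamma_eqI:
  assumes "\<And>w. adjacent N a w \<Longrightarrow> phi \<kappa> \<mu>L \<mu>R N a w \<le> v"
    and "adjacent N a w\<^sub>0" "phi \<kappa> \<mu>L \<mu>R N a w\<^sub>0 = v"
  shows "Gamma \<kappa> \<mu>L \<mu>R N a = - v"
  unfolding Gamma_def
  by (rule arg_cong[where f=uminus], rule Max_eqI[OF finite_phi_image]) (use assms in auto)

lemma Ucost_nonneg: "adjacent N a b \<Longrightarrow> Ucost \<kappa> \<mu>L \<mu>R N a b \<ge> 0"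
  unfolding Ucost_def Gamma_def using Max_ge[OF finite_phi_image] by fastforce

subsection \<open>Paths and the cost \<open>\<U>\<close>\<close>

lemma is_path_of_rtranclp:
  assumes "(adjacent N)\<^sup>*\<^sup>* a b" "a \<in> conf N"
  shows "\<exists>D. is_path N D a b"
  using assms(1)
proof (induction rule: rtranclp_induct)
  case base
  then show ?case using assms(2) unfolding is_path_def by (intro exI[of _ "[a]"]) auto
next
  case (step b c)
  then obtain D where D: "is_path N D a b" by blast
  have "is_path N (D @ [c]) a c" unfolding is_path_def
  proof (intro conjI allI impI)
    show "D @ [c] \<noteq> []" "last (D @ [c]) = c" by auto
    show "hd (D @ [c]) = a" "a \<in> conf N" using D unfolding is_path_def by auto
    fix m assume m: "m + 1 < length (D @ [c])"
    show "adjacent N ((D @ [c]) ! m) ((D @ [c]) ! (m + 1))"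
    proof (cases "m + 1 < length D")
      case True then show ?thesis using D unfolding is_path_def by (auto simp: nth_append)
    next
      case False
      then have "m = length D - 1" "D \<noteq> []" using m D unfolding is_path_def by auto
      moreover have "D ! (length D - 1) = b" using D unfolding is_path_def by (metis last_conv_nth)
      ultimately show ?thesis using step(2) by (auto simp: nth_append)
    qed
  qed
  then show ?case by blast
qed

lemma rtranclp_adjacent_remove_first:
  assumes "u \<in> conf N" "j < N" "u!j = 1" "\<forall>i<j. u!i = 0"
  shows "(adjacent N)\<^sup>*\<^sup>* u (u[j := 0])"
  using assms
proof (induction j arbitrary: u)
  case 0
  then have "adjacent N u (u[0 := 0])"
    unfolding adjacent_def jump_def flip_first_eq by auto
  then show ?case by auto
next
  case (Suc j)
  let ?w = "exch u j"
  have w: "?w = u[j := 1, Suc j := 0]" unfolding exch_def using Suc.prems by simp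
  have adj: "adjacent N u ?w"
    unfolding adjacent_def jump_def swap_jump_iff_exch using Suc.prems by auto
  have "(adjacent N)\<^sup>*\<^sup>* ?w (?w[j := 0])"
    using Suc.prems length_conf[OF Suc.prems(1)]
    by (intro Suc.IH exch_in_conf) (auto simp: w nth_list_update)
  moreover have "?w[j := 0] = u[Suc j := 0]"
  proof -
    have "?w[j := 0] = u[j := 0, Suc j := 0]" unfolding w by (simp add: list_update_swap)
    also have "u[j := 0] = u" using Suc.prems by (metis lessI list_update_id)
    finally show ?thesis .
  qed
  ultimately show ?case using adj by (metis converse_rtranclp_into_rtranclp)
qed

lemma rtranclp_adjacent_empty:
  assumes "u \<in> conf N"
  shows "(adjacent N)\<^sup>*\<^sup>* u (replicate N 0)"
proof -
  have l: "length u = N" using assms length_conf by auto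
  define z where "z k = map (\<lambda>i. if i < k then 0 else u!i) [0..<N]" for k
  have zn: "\<And>i. i < N \<Longrightarrow> z k ! i = (if i < k then 0 else u!i)" for k unfolding z_def by simp
  have zl: "length (z k) = N" for k unfolding z_def by simp
  have zc: "z k \<in> conf N" for k
    using conf_nth_le_1[OF assms] unfolding z_def conf_def by (force simp: le_Suc_eq)
  have "(adjacent N)\<^sup>*\<^sup>* u (z k)" if "k \<le> N" for k
    using that
  proof (induction k)
    case 0
    have "z 0 = u" unfolding z_def using l map_nth[of u] by simp
    then show ?case by simp
  next
    case (Suc k)
    then have IH: "(adjacent N)\<^sup>*\<^sup>* u (z k)" by simp
    have step: "(z k)[k := 0] = z (Suc k)"
      using Suc.prems by (intro nth_equalityI) (auto simp: zl zn nth_list_update less_Suc_eq)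
    show ?case
    proof (cases "u!k = 0")
      case True
      then have "z k = z (Suc k)" by (intro nth_equalityI) (auto simp: zl zn less_Suc_eq)
      then show ?thesis using IH by simp
    next
      case False
      then have "u!k = 1" using conf_nth_le_1[OF assms, of k] Suc.prems by auto
      then have "(adjacent N)\<^sup>*\<^sup>* (z k) ((z k)[k := 0])"
        using Suc.prems by (intro rtranclp_adjacent_remove_first zc) (auto simp: zn)
      then show ?thesis using IH step by simp
    qed
  qed
  moreover have "z N = replicate N 0" by (rule nth_equalityI) (auto simp: zl zn)
  ultimately show ?thesis by (metis order_refl)
qed

lemma rtranclp_adjacent_sym: "(adjacent N)\<^sup>*\<^sup>* a b \<Longrightarrow> (adjacent N)\<^sup>*\<^sup>* b a"
proof (induction rule: rtranclp_induct)
  case (step b c)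
  then have "adjacent N c b" unfolding adjacent_def by blast
  then show ?case using step(3) by (metis converse_rtranclp_into_rtranclp)
qed simp

lemma ex_path: "u \<in> conf N \<Longrightarrow> v \<in> conf N \<Longrightarrow> \<exists>D. is_path N D u v"
  using rtranclp_adjacent_empty[of u N] rtranclp_adjacent_sym[OF rtranclp_adjacent_empty[of v N]]
  by (intro is_path_of_rtranclp) auto

lemma path_cost_nonneg: "is_path N D a b \<Longrightarrow> path_cost \<kappa> \<mu>L \<mu>R N D \<ge> 0"
  unfolding path_cost_def is_path_def by (intro sum_nonneg Ucost_nonneg) auto

lemma calU_eq_0I:
  assumes "is_path N D a b" "path_cost \<kappa> \<mu>L \<mu>R N D = 0"
  shows "calU \<kappa> \<mu>L \<mu>R N a b = 0"
  unfolding calU_def by (rule cInf_eq_minimum) (use assms path_cost_nonneg in auto)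

lemma calU_eq_0_if_step:
  assumes "a \<in> conf N" "adjacent N a b" "Ucost \<kappa> \<mu>L \<mu>R N a b = 0"
  shows "calU \<kappa> \<mu>L \<mu>R N a b = 0"
  using assms by (intro calU_eq_0I[of N "[a, b]"]) (auto simp: is_path_def path_cost_def)

lemma calU_eq_0_if_two_steps:
  assumes "a \<in> conf N" "adjacent N a b" "adjacent N b c"
    and "Ucost \<kappa> \<mu>L \<mu>R N a b = 0" "Ucost \<kappa> \<mu>L \<mu>R N b c = 0"
  shows "calU \<kappa> \<mu>L \<mu>R N a c = 0"
  using assms
  by (intro calU_eq_0I[of N "[a, b, c]"])
    (auto simp: is_path_def path_cost_def less_Suc_eq numeral_2_eq_2)

lemma ex_exit_index: "P 0 \<Longrightarrow> \<not> P n \<Longrightarrow> \<exists>m<n. P m \<and> \<not> P (Suc m)"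
proof (induction n)
  case (Suc n)
  then show ?case by (cases "P n") (auto intro: less_SucI)
qed simp

text \<open>Every path from inside A to outside A contains a step leaving A, and all its other
  steps cost at least 0.\<close>

lemma calU_ge_exit_cost:
  assumes "A \<subseteq> conf N" "u \<in> A" "v \<in> conf N - A"
    and exit: "\<And>a w. a \<in> A \<Longrightarrow> adjacent N a w \<Longrightarrow> w \<notin> A \<Longrightarrow> Ucost \<kappa> \<mu>L \<mu>R N a w \<ge> c"
  shows "calU \<kappa> \<mu>L \<mu>R N u v \<ge> c"
  unfolding calU_def
proof (rule cInf_greatest)
  have "u \<in> conf N" "v \<in> conf N" using assms(1-3) by auto
  then obtain D where "is_path N D u v" using ex_path by blast
  then show "{path_cost \<kappa> \<mu>L \<mu>R N D | D. is_path N D u v} \<noteq> {}" by blast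
next
  fix p assume "p \<in> {path_cost \<kappa> \<mu>L \<mu>R N D | D. is_path N D u v}"
  then obtain D where D: "is_path N D u v" "p = path_cost \<kappa> \<mu>L \<mu>R N D" by blast
  have "D \<noteq> []" "hd D = u" "last D = v" using D(1) unfolding is_path_def by auto
  then have "D!0 \<in> A" "D!(length D - 1) \<notin> A"
    using assms(2,3) by (auto simp: hd_conv_nth last_conv_nth)
  then obtain m where m: "m < length D - 1" "D!m \<in> A" "D!(Suc m) \<notin> A"
    using ex_exit_index[of "\<lambda>i. D!i \<in> A"] by blast
  have adj: "adjacent N (D!m) (D!(m+1))" using D m unfolding is_path_def by auto
  have "Ucost \<kappa> \<mu>L \<mu>R N (D!m) (D!(m+1)) \<le> path_cost \<kappa> \<mu>L \<mu>R N D"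
    unfolding path_cost_def
    by (rule member_le_sum) (use m D in \<open>auto intro!: Ucost_nonneg simp: is_path_def\<close>)
  then show "c \<le> p" using exit[OF m(2) adj] m(3) D(2) by simp
qed

subsection \<open>The shape of configurations in \<open>\<P>\<close>\<close>

text \<open>No run of equal entries lying strictly inside the list has length 1 or 2.\<close>

fun interior_runs_long :: "nat list \<Rightarrow> bool" where
  "interior_runs_long (a#b#c#d#xs) =
     ((a = b \<or> b = c) \<and> (a = b \<or> c = d) \<and> interior_runs_long (b#c#d#xs))"
| "interior_runs_long [a,b,c] = (a = b \<or> b = c)"
| "interior_runs_long _ = True"

lemma interior_runs_long_nth_3:
  "interior_runs_long z \<Longrightarrow> i+2 < length z \<Longrightarrow> z!i = z!(i+1) \<or> z!(i+1) = z!(i+2)"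
proof (induction z arbitrary: i rule: interior_runs_long.induct)
  case (1 a b c d xs)
  then show ?case by (cases i) auto
next
  case (2 a b c)
  then show ?case by (cases i) auto
qed auto

lemma interior_runs_long_nth_4:
  "interior_runs_long z \<Longrightarrow> i+3 < length z \<Longrightarrow> z!i = z!(i+1) \<or> z!(i+2) = z!(i+3)"
proof (induction z arbitrary: i rule: interior_runs_long.induct)
  case (1 a b c d xs)
  then show ?case by (cases i) auto
qed auto

lemma interior_runs_long_replicate:
  "interior_runs_long (c#c#s) \<Longrightarrow> interior_runs_long (c#c#(replicate n c @ s))"
proof (induction n)
  case (Suc n)
  then have "interior_runs_long (c#c#c#(replicate n c @ s))"
    by (cases "replicate n c @ s" rule: interior_runs_long.cases) auto
  then show ?case by simp
qed simp

lemma replicate_ge_3_append: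
  assumes "q \<ge> 3" shows "replicate q c @ r = c#c#(replicate (q-3) c @ c # r)"
proof -
  obtain q' where "q = q' + 3" using assms by (metis add.commute le_add_diff_inverse)
  then show ?thesis by (simp add: numeral_3_eq_3 replicate_app_Cons_same)
qed

definition admissible_blocks :: "(nat \<times> nat) list \<Rightarrow> bool" where
  "admissible_blocks bs \<longleftrightarrow> bs \<noteq> [] \<and> (\<forall>i < length bs. fst (bs ! i) \<ge> 3) \<and>
      (\<forall>i < length bs - 1. snd (bs ! i) \<ge> 3) \<and> snd (last bs) \<ge> 2"

lemma of_blocks_Cons: "of_blocks ((p,q)#bs) = replicate p 1 @ replicate q 0 @ of_blocks bs"
  by (simp add: of_blocks_def)

lemma admissible_blocks_tl:
  assumes "admissible_blocks (b#bs)" "bs \<noteq> []"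
  shows "admissible_blocks bs" "fst b \<ge> 3" "snd b \<ge> 3"
proof -
  have V: "\<forall>i < length (b#bs). fst ((b#bs) ! i) \<ge> 3" "\<forall>i < length (b#bs) - 1. snd ((b#bs) ! i) \<ge> 3"
    "snd (last (b#bs)) \<ge> 2" using assms(1) unfolding admissible_blocks_def by blast+
  show "fst b \<ge> 3" "snd b \<ge> 3" using V(1)[rule_format, of 0] V(2)[rule_format, of 0] assms(2) by auto
  show "admissible_blocks bs" unfolding admissible_blocks_def
  proof (intro conjI allI impI)
    fix i assume "i < length bs" then show "fst (bs ! i) \<ge> 3" using V(1)[rule_format, of "Suc i"] by simp
  next
    fix i assume "i < length bs - 1" then show "snd (bs ! i) \<ge> 3" using V(2)[rule_format, of "Suc i"] by simp
  qed (use V(3) assms(2) in auto)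
qed

lemma of_admissible_blocks:
  "admissible_blocks bs \<Longrightarrow> interior_runs_long (of_blocks bs) \<and> (\<exists>t. of_blocks bs = 1#1#1#t)"
proof (induction bs)
  case Nil then show ?case by (simp add: admissible_blocks_def)
next
  case (Cons b bs)
  obtain p q where b: "b = (p,q)" by fastforce
  have p: "p \<ge> 3" using Cons.prems b unfolding admissible_blocks_def by (auto dest!: spec[of _ 0])
  obtain w where w: "of_blocks (b#bs) = replicate p 1 @ (0#0#w)" "interior_runs_long (1#0#0#w)"
  proof (cases "bs = []")
    case True
    then have "q \<ge> 2" using Cons.prems b unfolding admissible_blocks_def by simp
    then obtain q' where q': "q = Suc (Suc q')" by (metis add_2_eq_Suc le_iff_add add.commute)
    have "interior_runs_long (0#0#(replicate q' 0 @ []))"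
      by (rule interior_runs_long_replicate) simp
    then have "interior_runs_long (1#0#0#replicate q' 0)" by (cases q') auto
    then show thesis using True b q' that by (simp add: of_blocks_Cons of_blocks_def)
  next
    case False
    note bs = admissible_blocks_tl[OF Cons.prems False]
    have q: "q \<ge> 3" using bs b by simp
    obtain t where t: "of_blocks bs = 1#1#1#t" "interior_runs_long (1#1#1#t)" using Cons.IH bs by auto
    have "interior_runs_long (0#0#0#1#1#1#t)" using t(2) by simp
    then have "interior_runs_long (0#0#(replicate (q-3) 0 @ 0#1#1#1#t))"
      by (intro interior_runs_long_replicate) simp
    then have g: "interior_runs_long (replicate q 0 @ 1#1#1#t)"
      by (subst replicate_ge_3_append[OF q]) simp
    obtain w where "replicate q 0 @ 1#1#1#t = 0#0#0#w"
      using q by (metis replicate_ge_3_append replicate_app_Cons_same append_Cons)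
    then show thesis using g b t that[of "0#w"] by (simp add: of_blocks_Cons)
  qed
  have "interior_runs_long (1#1#1#0#0#w)" using w(2) by simp
  then have "interior_runs_long (1#1#(replicate (p-3) 1 @ 1#0#0#w))"
    by (intro interior_runs_long_replicate) simp
  then show ?case using w(1) replicate_ge_3_append[OF p, of 1 "0#0#w"]
    by (metis replicate_app_Cons_same)
qed

lemma of_admissible_blocks_ends_00:
  assumes "admissible_blocks bs" shows "\<exists>u. of_blocks bs = u @ [0,0]"
proof -
  obtain p q where l: "last bs = (p,q)" by fastforce
  have "bs \<noteq> []" "q \<ge> 2" using assms l unfolding admissible_blocks_def by auto
  then have "of_blocks bs = of_blocks (butlast bs @ [last bs])" by simp
  also have "\<dots> = of_blocks (butlast bs) @ replicate p 1 @ replicate q 0"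
    unfolding l by (simp add: of_blocks_def)
  finally have "of_blocks bs = of_blocks (butlast bs) @ replicate p 1 @ replicate q 0" .
  moreover obtain q' where "q = q' + 2" using \<open>q \<ge> 2\<close> by (metis add.commute le_add_diff_inverse)
  then have "replicate q (0::nat) = replicate q' 0 @ [0,0]"
    by (simp only: replicate_add) (simp add: numeral_2_eq_2)
  ultimately show ?thesis by auto
qed

lemma calP_nth:
  assumes "x \<in> calP N" "N \<ge> 3"
  shows "x \<in> conf N" "x!0 = 1" "x!1 = 1" "x!2 = 1" "x!(N-1) = 0" "x!(N-2) = 0"
    "\<And>i. i+2 < N \<Longrightarrow> x!i = x!(i+1) \<or> x!(i+1) = x!(i+2)"
    "\<And>i. i+3 < N \<Longrightarrow> x!i = x!(i+1) \<or> x!(i+2) = x!(i+3)"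
proof -
  show x: "x \<in> conf N" using assms unfolding calP_def by auto
  obtain bs where bs: "admissible_blocks bs" "x = of_blocks bs"
    using assms unfolding calP_def admissible_blocks_def by blast
  obtain t where t: "x = 1#1#1#t" "interior_runs_long x" using of_admissible_blocks[OF bs(1)] bs(2) by auto
  obtain u where u: "x = u @ [0,0]" using of_admissible_blocks_ends_00[OF bs(1)] bs(2) by auto
  show "x!0 = 1" "x!1 = 1" "x!2 = 1" using t by auto
  have "length u = N - 2" using u length_conf[OF x] by simp
  then show "x!(N-1) = 0" "x!(N-2) = 0" using u assms(2) by (auto simp: nth_append)
  show "\<And>i. i+2 < N \<Longrightarrow> x!i = x!(i+1) \<or> x!(i+1) = x!(i+2)"
    using interior_runs_long_nth_3 t(2) length_conf[OF x] by auto
  show "\<And>i. i+3 < N \<Longrightarrow> x!i = x!(i+1) \<or> x!(i+2) = x!(i+3)"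
    using interior_runs_long_nth_4 t(2) length_conf[OF x] by auto
qed

subsection \<open>Costs around a configuration of \<open>\<P>\<close>\<close>

definition wall :: "nat list \<Rightarrow> nat \<Rightarrow> bool" where
  "wall z k \<longleftrightarrow> k + 1 < length z \<and> z!k \<noteq> z!(k+1)"

lemma ex_wall: "n < length z \<Longrightarrow> z!0 \<noteq> z!n \<Longrightarrow> \<exists>k. wall z k"
proof (induction n)
  case (Suc n)
  then show ?case unfolding wall_def by (cases "z!0 = z!n") auto
qed simp

locale strong_driving =
  fixes N :: nat and \<kappa> \<mu>L \<mu>R :: real
  assumes N_ge_5: "N \<ge> 5" and muL_gt: "\<mu>L > \<kappa>" and kappa_pos: "\<kappa> > 0" and muR_lt: "\<mu>R < - \<kappa>"
begin

abbreviation "\<phi> \<equiv> phi \<kappa> \<mu>L \<mu>R N"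
abbreviation "U \<equiv> Ucost \<kappa> \<mu>L \<mu>R N"
abbreviation "\<Gamma> \<equiv> Gamma \<kappa> \<mu>L \<mu>R N"

definition exit_cost :: real where
  "exit_cost = min (\<kappa>/2) (-(\<mu>R+\<kappa>)/2)"

lemma exit_cost_pos: "exit_cost > 0"
  unfolding exit_cost_def using kappa_pos muR_lt by simp

context
  fixes x assumes x: "x \<in> calP N"
begin

lemma calP_in_conf: "x \<in> conf N"
  and calP_start: "x!0 = 1" "x!1 = 1" "x!2 = 1"
  and calP_end: "x!(N-1) = 0" "x!(N-2) = 0"
  and calP_runs_3: "\<And>i. i+2 < N \<Longrightarrow> x!i = x!(i+1) \<or> x!(i+1) = x!(i+2)"
  and calP_runs_4: "\<And>i. i+3 < N \<Longrightarrow> x!i = x!(i+1) \<or> x!(i+2) = x!(i+3)"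
  using calP_nth[OF x] N_ge_5 by auto

lemma length_calP: "length x = N"
  using calP_in_conf length_conf by auto

lemma calP_wall:
  assumes "wall x k"
  shows "2 \<le> k" "k + 2 < N" "x!(k-1) = x!k" "x!(k+2) = x!(k+1)" "x!k \<le> 1" "x!(k+1) \<le> 1"
proof -
  have k: "k+1 < N" "x!k \<noteq> x!(k+1)" using assms length_calP unfolding wall_def by auto
  show "2 \<le> k" using k calP_start by (cases k; cases "k - 1") (auto simp: numeral_2_eq_2)
  show "k + 2 < N"
  proof (rule ccontr)
    assume "\<not> k + 2 < N"
    then have "k = N - 2" "k + 1 = N - 1" using k(1) by auto
    then show False using k(2) calP_end by simp
  qed
  show "x!(k-1) = x!k" using calP_runs_3[of "k-1"] k \<open>2 \<le> k\<close> by auto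
  show "x!(k+2) = x!(k+1)" using calP_runs_3[of k] k \<open>k+2 < N\<close> by auto
  show "x!k \<le> 1" "x!(k+1) \<le> 1" using conf_nth_le_1[OF calP_in_conf] k by auto
qed

lemma bond_gain_calP_wall: "wall x k \<Longrightarrow> bond_gain x k = -1"
  using calP_wall[of k] length_calP unfolding bond_gain_def wall_def
  by (auto simp: le_Suc_eq)

lemma adjacent_calP_iff:
  "adjacent N x w \<longleftrightarrow> w = flip x 1 \<or> w = flip x N \<or> (\<exists>k. wall x k \<and> w = exch x k)"
  using adjacent_iff[OF calP_in_conf, of w] N_ge_5 length_calP unfolding wall_def by auto

lemma phi_calP_exch: "wall x k \<Longrightarrow> \<phi> x (exch x k) = - \<kappa> / 2"
  using phi_exch[OF calP_in_conf, of k] bond_gain_calP_wall[of k] length_calP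
  unfolding wall_def by auto

lemma phi_calP_flip_first: "\<phi> x (flip x 1) = - \<mu>L / 2 - \<kappa> / 2"
  using phi_flip_first[OF calP_in_conf] N_ge_5 calP_start by simp

lemma phi_calP_flip_last: "\<phi> x (flip x N) = \<mu>R / 2"
  using phi_flip_last[OF calP_in_conf] N_ge_5 calP_end by simp

lemma Gamma_calP: "\<Gamma> x = \<kappa> / 2"
proof -
  obtain k where k: "wall x k"
    using ex_wall[of "N-1" x] length_calP calP_start calP_end N_ge_5 by auto
  have "\<Gamma> x = - (- \<kappa> / 2)"
  proof (rule Gamma_eqI)
    show "\<phi> x w \<le> - \<kappa> / 2" if "adjacent N x w" for w
      using that phi_calP_exch phi_calP_flip_first phi_calP_flip_last muL_gt kappa_pos muR_lt
      unfolding adjacent_calP_iff by auto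
    show "adjacent N x (exch x k)" "\<phi> x (exch x k) = - \<kappa> / 2"
      using adjacent_calP_iff phi_calP_exch k by auto
  qed
  then show ?thesis by simp
qed

lemma Ucost_calP: "U x w = - \<phi> x w - \<kappa> / 2"
  unfolding Ucost_def Gamma_calP by simp

lemma preferred_successor_calP_iff:
  "preferred_successor \<kappa> \<mu>L \<mu>R N x w \<longleftrightarrow> (\<exists>k. wall x k \<and> w = exch x k)"
  unfolding preferred_successor_def Ucost_calP adjacent_calP_iff
  using phi_calP_exch phi_calP_flip_first phi_calP_flip_last muL_gt kappa_pos muR_lt by auto

lemma Ucost_calP_exit:
  assumes "adjacent N x w" "\<nexists>k. wall x k \<and> w = exch x k"
  shows "U x w \<ge> exit_cost"
proof -
  have "w = flip x 1 \<or> w = flip x N" using assms adjacent_calP_iff by auto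
  then have "U x w = \<mu>L / 2 \<or> U x w = - \<mu>R / 2 - \<kappa> / 2"
    using Ucost_calP phi_calP_flip_first phi_calP_flip_last by auto
  then show ?thesis unfolding exit_cost_def using muL_gt kappa_pos muR_lt by (auto simp: min_def)
qed

end

subsection \<open>Costs around a preferred successor of a configuration of \<open>\<P>\<close>\<close>

context
  fixes x k y assumes x: "x \<in> calP N" and k: "wall x k" and y: "y = exch x k"
begin

lemma exch_wall_facts:
  shows "y \<in> conf N" "length y = N" "\<And>i. i \<noteq> k \<Longrightarrow> i \<noteq> k+1 \<Longrightarrow> y!i = x!i"
    "y!0 = 1" "y!1 = 1" "y!(N-1) = 0" "exch y k = x" "y!k \<noteq> y!(k+1)"
proof -
  note wall = calP_wall[OF x k]
  have k1: "k+1 < N" using wall by auto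
  note nth = nth_exch[of k x, unfolded length_calP[OF x] y[symmetric], OF k1]
  show "y \<in> conf N" using exch_in_conf[OF calP_in_conf[OF x] k1] y by simp
  show "length y = N" using length_calP[OF x] y by simp
  show same: "\<And>i. i \<noteq> k \<Longrightarrow> i \<noteq> k+1 \<Longrightarrow> y!i = x!i" using nth by auto
  show "y!0 = 1" "y!1 = 1" "y!(N-1) = 0"
    using same[of 0] same[of 1] same[of "N-1"] wall calP_start[OF x] calP_end[OF x] by auto
  show "exch y k = x" using exch_exch[of k x] length_calP[OF x] k1 y by simp
  show "y!k \<noteq> y!(k+1)" using nth k unfolding wall_def by auto
qed

lemma phi_exch_wall_back: "\<phi> y x = \<kappa> / 2"
proof -
  have k1: "k+1 < N" using calP_wall[OF x k] by auto
  have "int (bonds (exch y k)) = int (bonds y) + bond_gain y k"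
    "int (bonds y) = int (bonds x) + bond_gain x k"
    using bonds_exch[of k y] bonds_exch[of k x] k1 length_calP[OF x] y by auto
  then have "bond_gain y k = 1" using bond_gain_calP_wall[OF x k] exch_wall_facts(7) by simp
  then show ?thesis
    using phi_exch[OF exch_wall_facts(1) k1 exch_wall_facts(8)] exch_wall_facts(7) by simp
qed

lemma adjacent_exch_wall_back: "adjacent N y x"
proof -
  have "k+1 < N" using calP_wall[OF x k] by auto
  then have "\<exists>m. m+1 < N \<and> y!m \<noteq> y!(m+1) \<and> x = exch y m"
    using exch_wall_facts(7,8) by metis
  then show ?thesis using adjacent_iff[OF exch_wall_facts(1), of x] N_ge_5 by auto
qed

text \<open>A second domain wall of y that could be removed by an exchange would be a run of
  length at most two in x.\<close>

lemma bond_gain_exch_wall_other: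
  assumes m: "m+1 < N" "y!m \<noteq> y!(m+1)" "m \<noteq> k"
  shows "bond_gain y m \<le> 0"
proof (rule ccontr)
  assume "\<not> bond_gain y m \<le> 0"
  then have pos: "bond_gain y m > 0" by simp
  note yx = exch_wall_facts(3)
  have m0: "m \<noteq> 0"
  proof
    assume "m = 0"
    then show False using m exch_wall_facts(4,5) by simp
  qed
  have m2: "m + 2 < N"
  proof (rule ccontr)
    assume "\<not> m + 2 < N"
    moreover have "m + 1 = N - 1" using calculation m by auto
    ultimately have "bond_gain y m = (0 - int (y!m)) * int (y!(m-1))"
      unfolding bond_gain_def using exch_wall_facts(2,6) m0 by auto
    then show False using pos by (simp add: mult_less_0_iff)
  qed
  have walls: "y!(m-1) \<noteq> y!m" "y!m \<noteq> y!(m+1)" "y!(m+1) \<noteq> y!(m+2)"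
    using bond_gain_pos_alternating[of y m] pos m0 m2 exch_wall_facts(2)
      conf_nth_le_1[OF exch_wall_facts(1)] by auto
  consider "m \<ge> k + 2" | "m = k + 1" | "m + 1 = k" | "m + 2 \<le> k" using m(3) by linarith
  then show False
  proof cases
    case 1
    then have "x!m \<noteq> x!(m+1)" "x!(m+1) \<noteq> x!(m+2)"
      using walls yx[of m] yx[of "m+1"] yx[of "m+2"] by auto
    then show False using calP_runs_3[OF x, of m] m2 by auto
  next
    case 2
    then have "x!(k+2) \<noteq> x!(k+3)" using walls(3) yx[of "k+2"] yx[of "k+3"]
      by (auto simp: numeral_3_eq_3)
    then show False using k calP_runs_4[OF x, of k] m2 2 unfolding wall_def
      by (auto simp: numeral_3_eq_3)
  next
    case 3
    then have "x!(m-1) \<noteq> x!m" using walls(1) yx[of "m-1"] yx[of m] by auto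
    then show False using k calP_runs_4[OF x, of "m-1"] m0 m2 3 unfolding wall_def by auto
  next
    case 4
    then have "x!(m-1) \<noteq> x!m" "x!m \<noteq> x!(m+1)"
      using walls yx[of "m-1"] yx[of m] yx[of "m+1"] by auto
    then show False using calP_runs_3[OF x, of "m-1"] m0 m2 by auto
  qed
qed

lemma phi_exch_wall_other:
  assumes "adjacent N y w" "w \<noteq> x"
  shows "\<phi> y w \<le> 0"
proof -
  have y: "y \<in> conf N" using exch_wall_facts(1) .
  consider "w = flip y 1" | "w = flip y N" | m where "m+1 < N" "y!m \<noteq> y!(m+1)" "w = exch y m"
    using adjacent_iff[OF y, of w] N_ge_5 assms(1) by auto
  then show ?thesis
  proof cases
    case 1
    then show ?thesis using phi_flip_first[OF y] N_ge_5 exch_wall_facts(4,5) muL_gt kappa_pos by simp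
  next
    case 2
    have "y!(N-2) \<le> 1" using conf_nth_le_1[OF y, of "N-2"] N_ge_5 by auto
    then have "\<kappa> / 2 * real (y!(N-2)) \<le> \<kappa> / 2" using kappa_pos by simp
    then show ?thesis using 2 phi_flip_last[OF y] N_ge_5 exch_wall_facts(6) muR_lt by simp
  next
    case 3
    then have "m \<noteq> k" using assms(2) exch_wall_facts(7) by auto
    then have "\<kappa> / 2 * real_of_int (bond_gain y m) \<le> 0"
      using bond_gain_exch_wall_other 3 kappa_pos by (simp add: mult_nonneg_nonpos)
    then show ?thesis using phi_exch[OF y 3(1,2), of \<kappa> \<mu>L \<mu>R] 3(3) by simp
  qed
qed

lemma Gamma_exch_wall: "\<Gamma> y = - \<kappa> / 2"
proof -
  have "\<Gamma> y = - (\<kappa> / 2)"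
    by (rule Gamma_eqI[OF _ adjacent_exch_wall_back phi_exch_wall_back])
      (use phi_exch_wall_other phi_exch_wall_back kappa_pos in fastforce)
  then show ?thesis by simp
qed

lemma Ucost_exch_wall: "U y w = - \<phi> y w + \<kappa> / 2"
  unfolding Ucost_def Gamma_exch_wall by simp

lemma preferred_successor_exch_wall_iff: "preferred_successor \<kappa> \<mu>L \<mu>R N y w \<longleftrightarrow> w = x"
  unfolding preferred_successor_def Ucost_exch_wall
  using adjacent_exch_wall_back phi_exch_wall_back phi_exch_wall_other kappa_pos by fastforce

lemma Ucost_exch_wall_exit: "adjacent N y w \<Longrightarrow> w \<noteq> x \<Longrightarrow> U y w \<ge> exit_cost"
  using Ucost_exch_wall phi_exch_wall_other[of w] unfolding exit_cost_def by fastforce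

end

subsection \<open>The attractors \<open>\<A>\<^sub>x\<close>\<close>

lemma attr_set_calP:
  "x \<in> calP N \<Longrightarrow> attr_set \<kappa> \<mu>L \<mu>R N x = insert x {exch x k | k. wall x k}"
  unfolding attr_set_def using preferred_successor_calP_iff by auto

lemma Ucost_calP_exch: "x \<in> calP N \<Longrightarrow> wall x k \<Longrightarrow> U x (exch x k) = 0"
  using preferred_successor_calP_iff[of x "exch x k"] unfolding preferred_successor_def by auto

lemma Ucost_exch_wall_back: "x \<in> calP N \<Longrightarrow> wall x k \<Longrightarrow> U (exch x k) x = 0"
  using Ucost_exch_wall[OF _ _ refl] phi_exch_wall_back[OF _ _ refl] by simp

lemma attractor_attr_set:
  assumes x: "x \<in> calP N"
  shows "attractor \<kappa> \<mu>L \<mu>R N (attr_set \<kappa> \<mu>L \<mu>R N x)"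
proof -
  let ?A = "attr_set \<kappa> \<mu>L \<mu>R N x"
  note A = attr_set_calP[OF x]
  have x_adj: "adjacent N x (exch x k)" if "wall x k" for k
    using that adjacent_calP_iff[OF x] by auto
  have sub: "?A \<subseteq> conf N" unfolding A using calP_in_conf[OF x] exch_wall_facts(1)[OF x _ refl] by auto
  have zero: "calU \<kappa> \<mu>L \<mu>R N u v = 0" if uv: "u \<in> ?A" "v \<in> ?A" "u \<noteq> v" for u v
  proof -
    have "u = x \<or> (\<exists>k. wall x k \<and> u = exch x k)" "v = x \<or> (\<exists>j. wall x j \<and> v = exch x j)"
      using uv(1,2) unfolding A by auto
    then consider k where "wall x k" "u = x" "v = exch x k" | k where "wall x k" "u = exch x k" "v = x"
      | k j where "wall x k" "wall x j" "u = exch x k" "v = exch x j"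
      using uv(3) by blast
    then show ?thesis
    proof cases
      case 1
      then show ?thesis
        using calU_eq_0_if_step calP_in_conf[OF x] x_adj Ucost_calP_exch[OF x] by simp
    next
      case 2
      then show ?thesis
        using calU_eq_0_if_step exch_wall_facts(1)[OF x _ refl] adjacent_exch_wall_back[OF x _ refl]
          Ucost_exch_wall_back[OF x] by simp
    next
      case 3
      then show ?thesis
        using calU_eq_0_if_two_steps[OF exch_wall_facts(1)[OF x 3(1) refl]
            adjacent_exch_wall_back[OF x 3(1) refl] x_adj[OF 3(2)]]
          Ucost_exch_wall_back[OF x 3(1)] Ucost_calP_exch[OF x 3(2)] by simp
    qed
  qed
  have exit: "U a w \<ge> exit_cost" if "a \<in> ?A" "adjacent N a w" "w \<notin> ?A" for a w
    using that Ucost_calP_exit[OF x] Ucost_exch_wall_exit[OF x _ refl] unfolding A by auto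
  have "calU \<kappa> \<mu>L \<mu>R N u v > 0" if "u \<in> ?A" "v \<in> conf N - ?A" for u v
    using calU_ge_exit_cost[OF sub that exit] exit_cost_pos by fastforce
  moreover have "?A \<noteq> {}" unfolding A by simp
  ultimately show ?thesis using sub zero unfolding attractor_def by auto
qed

lemma attr_set_disjoint:
  assumes x: "x \<in> calP N" and v: "v \<in> calP N" and "v \<noteq> x"
  shows "attr_set \<kappa> \<mu>L \<mu>R N x \<inter> attr_set \<kappa> \<mu>L \<mu>R N v = {}"
proof -
  have not_successor: "a \<noteq> exch b k" if "a \<in> calP N" "b \<in> calP N" "wall b k" for a b k
    using Gamma_calP[OF that(1)] Gamma_exch_wall[OF that(2,3) refl] kappa_pos by auto
  have "exch x k \<noteq> exch v j" if "wall x k" "wall v j" for k j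
    using preferred_successor_exch_wall_iff[OF x that(1) refl]
      preferred_successor_exch_wall_iff[OF v that(2) refl] assms(3) by metis
  then show ?thesis
    using not_successor[OF x v] not_successor[OF v x] assms(3) unfolding attr_set_calP[OF x] attr_set_calP[OF v]
    by blast
qed

end

theorem corollary1:
  fixes N :: nat and \<kappa> \<mu>L \<mu>R :: real and x :: "nat list"
  assumes "N \<ge> 5" and "\<mu>L > \<kappa>" and "\<kappa> > 0" and "0 > \<mu>R" and "\<bar>\<mu>R\<bar> > \<kappa>"
    and "x \<in> calP N"
  shows "attractor \<kappa> \<mu>L \<mu>R N (attr_set \<kappa> \<mu>L \<mu>R N x) \<and>
    (\<forall>y\<in>calP N. y \<noteq> x \<longrightarrow> attr_set \<kappa> \<mu>L \<mu>R N x \<inter> attr_set \<kappa> \<mu>L \<mu>R N y = {})"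
proof -
  interpret strong_driving N \<kappa> \<mu>L \<mu>R
    using assms(1-5) by unfold_locales auto
  show ?thesis using attractor_attr_set attr_set_disjoint assms(6) by blast
qed

end
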